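(* Let $1<p<2$. There is a constant $C_p$ depending only on $p$ with the following property. Let $g\in L^p(\mathbb R)$ with $\|g\|_p=1$, let $T,S\subset\mathbb R$ be countable, and suppose $\{(e_s\tau_tg,\,g^*_{ts}):(t,s)\in T\times S\}$ is a $K$-unconditional Schauder frame of $L^p(\mathbb R)$. Let $\delta>0$ satisfy $\sup_{0<\sigma<\delta}\int_{\mathbb R}|g(x)|^p|e^{2\pi i\sigma x}-1|^p\,dx<2^{-p}$, and put $S_l=S\cap[l\delta,(l+1)\delta)$, $l\in\mathbb Z$. Then for every $f\in L^p(\mathbb R)$, $$\Big(\sum_{t\in T}\sum_{l\in\mathbb Z}\Big(\sum_{s\in S_l}|g^*_{ts}(f)|\Big)^2\Big)^{1/2}\le 2KC_p\|f\|_p.$$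
   Context: $(\tau_t g)(x)=g(x-t)$, $e_s(x)=e^{2\pi i s x}$. A family $\{(u_n,u_n^* )\}\subset X\times X^*$ is a $K$-unconditional Schauder frame of $X$ if for every $x\in X$ the series $\sum_nu_n^*(x)u_n$ converges unconditionally to $x$ and $\|\sum_n\theta_nu_n^*(x)u_n\|\le K\|x\|$ for all scalars $|\theta_n|\le1$. *)

theory Defs
  imports "HOL-Analysis.Analysis"
begin

definition Lp :: "real \<Rightarrow> (real \<Rightarrow> complex) set" where
  "Lp p = {f. f \<in> borel_measurable lborel \<and> integrable lborel (\<lambda>x. cmod (f x) powr p)}"

definition Lp_norm :: "real \<Rightarrow> (real \<Rightarrow> complex) \<Rightarrow> real" where
  "Lp_norm p f = (LINT x|lborel. cmod (f x) powr p) powr (1 / p)"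

definition Lp_dual :: "real \<Rightarrow> ((real \<Rightarrow> complex) \<Rightarrow> complex) \<Rightarrow> bool" where
  "Lp_dual p \<phi> \<longleftrightarrow>
     (\<forall>f\<in>Lp p. \<forall>h\<in>Lp p. \<phi> (\<lambda>x. f x + h x) = \<phi> f + \<phi> h) \<and>
     (\<forall>f\<in>Lp p. \<forall>c. \<phi> (\<lambda>x. c * f x) = c * \<phi> f) \<and>
     (\<exists>B. \<forall>f\<in>Lp p. cmod (\<phi> f) \<le> B * Lp_norm p f)"

definition transl :: "real \<Rightarrow> (real \<Rightarrow> complex) \<Rightarrow> real \<Rightarrow> complex" where
  "transl t g = (\<lambda>x. g (x - t))"

definition expo :: "real \<Rightarrow> real \<Rightarrow> complex" where
  "expo s = (\<lambda>x. exp (2 * pi * \<i> * complex_of_real (s * x)))"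

definition Lp_uncond_conv ::
  "real \<Rightarrow> 'i set \<Rightarrow> ('i \<Rightarrow> complex) \<Rightarrow> ('i \<Rightarrow> real \<Rightarrow> complex) \<Rightarrow> (real \<Rightarrow> complex) \<Rightarrow> bool" where
  "Lp_uncond_conv p I c u y \<longleftrightarrow>
     (\<forall>\<epsilon>>0. \<exists>F0. finite F0 \<and> F0 \<subseteq> I \<and>
        (\<forall>F. finite F \<and> F0 \<subseteq> F \<and> F \<subseteq> I \<longrightarrow>
           Lp_norm p (\<lambda>x. y x - (\<Sum>i\<in>F. c i * u i x)) < \<epsilon>))"

definition Lp_uncond_frame ::
  "real \<Rightarrow> 'i set \<Rightarrow> ('i \<Rightarrow> real \<Rightarrow> complex) \<Rightarrow> ('i \<Rightarrow> (real \<Rightarrow> complex) \<Rightarrow> complex) \<Rightarrow> real \<Rightarrow> bool" where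
  "Lp_uncond_frame p I u us K \<longleftrightarrow>
     (\<forall>i\<in>I. u i \<in> Lp p \<and> Lp_dual p (us i)) \<and>
     (\<forall>x\<in>Lp p.
        Lp_uncond_conv p I (\<lambda>i. us i x) u x \<and>
        (\<forall>\<theta>::'i \<Rightarrow> complex. (\<forall>i\<in>I. cmod (\<theta> i) \<le> 1) \<longrightarrow>
           (\<exists>y\<in>Lp p. Lp_uncond_conv p I (\<lambda>i. \<theta> i * us i x) u y \<and>
                      Lp_norm p y \<le> K * Lp_norm p x)))"

end

theory Submission
  imports Defs
begin

text \<open>For \<open>s\<close> in the
  band \<open>[l\<delta>, (l + 1)\<delta>)\<close>, a unimodular multiple of the atom \<open>M\<^sub>s T\<^sub>t g\<close> lies within \<open>1/2\<close> of
  \<open>M\<^sub>l\<^sub>\<delta> T\<^sub>t g\<close> in \<open>L\<^sup>p\<close> (this is the hypothesis on \<open>\<delta>\<close>), so the \<open>\<ell>\<^sup>1\<close>-norm of the coefficients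
  of a finite block is at most twice the norm of the block sum \<open>W\<^sub>t\<^sub>,\<^sub>l\<close> of suitably rotated atoms
  weighted by the moduli of the coefficients. Unconditionality bounds every signed sum
  \<open>\<Sum> \<plusminus>W\<^sub>t\<^sub>,\<^sub>l\<close> by \<open>K \<parallel>f\<parallel>\<^sub>p\<close>, and since \<open>L\<^sup>p\<close> has cotype 2 for \<open>p \<le> 2\<close> (Khintchine's
  inequality integrated pointwise, followed by the reverse Minkowski inequality in \<open>L\<^sup>p\<^sup>/\<^sup>2\<close>),
  \<open>\<Sum> \<parallel>W\<^sub>t\<^sub>,\<^sub>l\<parallel>\<^sub>p\<^sup>2 \<le> 12\<^sup>2\<^sup>/\<^sup>p (K \<parallel>f\<parallel>\<^sub>p)\<^sup>2\<close>. Exhausting the bands by finite blocks gives the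
  theorem with \<open>C\<^sub>p = 12\<close>.\<close>

section \<open>Minkowski inequalities for \<open>L\<^sup>r\<close> quasi-norms\<close>

lemma powr_le_powr_iff:
  fixes x y r :: real
  assumes "0 < r" "0 \<le> x" "0 \<le> y"
  shows "x powr r \<le> y powr r \<longleftrightarrow> x \<le> y"
  using assms by (meson not_le powr_less_mono2 powr_mono2 less_imp_le)

lemma powr_concave:
  assumes "0 < r" "r \<le> 1"
  shows "concave_on {0<..} (\<lambda>x::real. x powr r)"
proof (rule f''_le0_imp_concave)
  fix x :: real assume x: "x \<in> {0<..}"
  show "((\<lambda>x. x powr r) has_real_derivative r * x powr (r - 1)) (at x)"
    using x by (auto intro!: derivative_eq_intros)
  show "((\<lambda>x. r * x powr (r - 1)) has_real_derivative r * ((r - 1) * x powr (r - 1 - 1))) (at x)"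
    using x by (auto intro!: derivative_eq_intros)
  show "r * ((r - 1) * x powr (r - 1 - 1)) \<le> 0"
    using assms by (intro mult_nonneg_nonpos mult_nonpos_nonneg) auto
qed simp

lemma powr_convex_combination_le:
  fixes u v s t r :: real
  assumes "1 \<le> r" "0 \<le> u" "0 \<le> v" "0 \<le> s" "0 \<le> t" "s + t = 1"
  shows "(s * u + t * v) powr r \<le> s * u powr r + t * v powr r"
proof -
  have s: "s = 1 - t"
    using assms by simp
  have weight: "c powr r * w \<le> c * w" if "0 \<le> c" "c \<le> 1" "0 \<le> w" for c w :: real
    using that assms(1) powr_le_one_le[of c r] by (cases "c = 0") (auto intro: mult_right_mono)
  consider "0 < u" "0 < v" | "u = 0" | "v = 0"
    using assms by linarith
  then show ?thesis
  proof cases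
    case 1
    then show ?thesis
      using convex_onD[OF powr_convex[OF assms(1)], of t u v] assms unfolding s by simp
  qed (use assms weight[of t "v powr r"] weight[of s "u powr r"] in \<open>auto simp: powr_mult\<close>)
qed

lemma powr_convex_combination_ge:
  fixes u v s t r :: real
  assumes "0 < r" "r \<le> 1" "0 \<le> u" "0 \<le> v" "0 \<le> s" "0 \<le> t" "s + t = 1"
  shows "s * u powr r + t * v powr r \<le> (s * u + t * v) powr r"
proof -
  have s: "s = 1 - t"
    using assms by simp
  have weight: "c * w \<le> c powr r * w" if "0 \<le> c" "c \<le> 1" "0 \<le> w" for c w :: real
    using that assms(1,2) powr_mono'[of r 1 c] by (cases "c = 0") (auto intro: mult_right_mono)
  consider "0 < u" "0 < v" | "u = 0" | "v = 0"
    using assms by linarith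
  then show ?thesis
  proof cases
    case 1
    then show ?thesis
      using concave_onD[OF powr_concave[OF assms(1,2)], of t u v] assms unfolding s by simp
  qed (use assms weight[of t "v powr r"] weight[of s "u powr r"] in \<open>auto simp: powr_mult\<close>)
qed

definition Lnorm :: "'a measure \<Rightarrow> real \<Rightarrow> ('a \<Rightarrow> real) \<Rightarrow> real" where
  "Lnorm M r F = (\<integral>x. F x powr r \<partial>M) powr (1 / r)"

lemma Lnorm_nonneg: "0 \<le> Lnorm M r F"
  by (simp add: Lnorm_def)

lemma Lnorm_powr:
  assumes "0 < r"
  shows "Lnorm M r F powr r = (\<integral>x. F x powr r \<partial>M)"
  using assms by (simp add: Lnorm_def powr_powr integral_nonneg_AE)

lemma Lnorm_le_iff:
  assumes "0 < r" "0 \<le> X"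
  shows "Lnorm M r F \<le> X \<longleftrightarrow> (\<integral>x. F x powr r \<partial>M) \<le> X powr r"
  using assms by (simp add: Lnorm_powr[symmetric] powr_le_powr_iff Lnorm_nonneg)

lemma le_Lnorm_iff:
  assumes "0 < r" "0 \<le> X"
  shows "X \<le> Lnorm M r F \<longleftrightarrow> X powr r \<le> (\<integral>x. F x powr r \<partial>M)"
  using assms by (simp add: Lnorm_powr[symmetric] powr_le_powr_iff Lnorm_nonneg)

lemma Lnorm_mono:
  assumes "0 < r" "\<And>x. 0 \<le> F x" "\<And>x. F x \<le> G x"
    and "integrable M (\<lambda>x. F x powr r)" "integrable M (\<lambda>x. G x powr r)"
  shows "Lnorm M r F \<le> Lnorm M r G"
  unfolding Lnorm_def using assms
  by (intro powr_mono2 integral_mono integral_nonneg_AE) auto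

lemma integrable_powr_le_add:
  fixes F G H :: "'a \<Rightarrow> real"
  assumes "0 < r" and [measurable]: "H \<in> borel_measurable M"
    and "\<And>x. 0 \<le> F x" "\<And>x. 0 \<le> G x" "\<And>x. 0 \<le> H x" "\<And>x. H x \<le> F x + G x"
    and "integrable M (\<lambda>x. F x powr r)" "integrable M (\<lambda>x. G x powr r)"
  shows "integrable M (\<lambda>x. H x powr r)"
proof (rule Bochner_Integration.integrable_bound)
  show "integrable M (\<lambda>x. 2 powr r * (F x powr r + G x powr r))"
    using assms by auto
  show "AE x in M. norm (H x powr r) \<le> norm (2 powr r * (F x powr r + G x powr r))"
  proof (intro AE_I2)
    fix x
    have "H x powr r \<le> (2 * max (F x) (G x)) powr r"
      using assms(1) assms(5,6)[of x] by (intro powr_mono2) auto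
    also have "\<dots> \<le> 2 powr r * (F x powr r + G x powr r)"
      using assms(3,4)[of x] by (auto simp: powr_mult max_def)
    finally show "norm (H x powr r) \<le> norm (2 powr r * (F x powr r + G x powr r))"
      by simp
  qed
qed measurable

lemma integrable_sum_powr:
  fixes F :: "'i \<Rightarrow> 'a \<Rightarrow> real"
  assumes "0 < r" "finite I" "\<And>i. i \<in> I \<Longrightarrow> F i \<in> borel_measurable M"
    and "\<And>i x. i \<in> I \<Longrightarrow> 0 \<le> F i x" "\<And>i. i \<in> I \<Longrightarrow> integrable M (\<lambda>x. F i x powr r)"
  shows "integrable M (\<lambda>x. (\<Sum>i\<in>I. F i x) powr r)"
  using assms(2-)
proof (induction I rule: finite_induct)
  case (insert j I)
  have "integrable M (\<lambda>x. (F j x + (\<Sum>i\<in>I. F i x)) powr r)"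
  proof (rule integrable_powr_le_add[where F = "F j" and G = "\<lambda>x. \<Sum>i\<in>I. F i x"])
    show "(\<lambda>x. F j x + (\<Sum>i\<in>I. F i x)) \<in> borel_measurable M"
      using insert.prems(1) by (intro borel_measurable_add borel_measurable_sum) auto
  qed (use \<open>0 < r\<close> insert in \<open>auto intro!: add_nonneg_nonneg sum_nonneg\<close>)
  with insert show ?case
    by simp
qed simp

text \<open>With \<open>a\<close>, \<open>b\<close> slightly larger than the norms of \<open>F\<close> and \<open>G\<close>,
  the convexity of \<open>x powr r\<close> bounds \<open>(F + G) powr r\<close> pointwise by a convex combination of
  \<open>(F / a) powr r\<close> and \<open>(G / b) powr r\<close>, whose integrals are at most \<open>1\<close>.\<close>
lemma Lnorm_triangle_ineq:
  fixes F G H :: "'a \<Rightarrow> real"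
  assumes r: "1 \<le> r" and [measurable]: "H \<in> borel_measurable M"
    and nonneg: "\<And>x. 0 \<le> F x" "\<And>x. 0 \<le> G x" "\<And>x. 0 \<le> H x"
    and le: "\<And>x. H x \<le> F x + G x"
    and int: "integrable M (\<lambda>x. F x powr r)" "integrable M (\<lambda>x. G x powr r)"
  shows "Lnorm M r H \<le> Lnorm M r F + Lnorm M r G"
proof (rule field_le_epsilon)
  fix e :: real
  assume "0 < e"
  define a where "a = Lnorm M r F + e / 2"
  define b where "b = Lnorm M r G + e / 2"
  have ab: "0 < a" "0 < b"
    using \<open>0 < e\<close> by (auto simp: a_def b_def intro!: add_nonneg_pos Lnorm_nonneg)
  have intF: "(\<integral>x. F x powr r \<partial>M) \<le> a powr r" and intG: "(\<integral>x. G x powr r \<partial>M) \<le> b powr r"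
    using r ab \<open>0 < e\<close> by (simp_all add: Lnorm_le_iff[symmetric] a_def b_def)
  have pointwise: "H x powr r
      \<le> (a + b) powr r * (a / (a + b) * (F x / a) powr r + b / (a + b) * (G x / b) powr r)" for x
  proof -
    have "H x powr r \<le> (F x + G x) powr r"
      using r nonneg le by (intro powr_mono2) auto
    also have "F x + G x = (a + b) * (a / (a + b) * (F x / a) + b / (a + b) * (G x / b))"
      using ab by (simp add: distrib_left)
    also have "\<dots> powr r = (a + b) powr r * (a / (a + b) * (F x / a) + b / (a + b) * (G x / b)) powr r"
      using ab nonneg by (simp add: powr_mult)
    also have "\<dots> \<le> (a + b) powr r * (a / (a + b) * (F x / a) powr r + b / (a + b) * (G x / b) powr r)"
      using r ab nonneg by (intro mult_left_mono powr_convex_combination_le) (auto simp: add_divide_distrib[symmetric])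
    finally show ?thesis .
  qed
  have "integrable M (\<lambda>x. H x powr r)"
    using r by (intro integrable_powr_le_add[OF _ _ nonneg le int]) simp_all
  then have "(\<integral>x. H x powr r \<partial>M)
      \<le> (\<integral>x. (a + b) powr r * (a / (a + b) * (F x / a) powr r + b / (a + b) * (G x / b) powr r) \<partial>M)"
    by (rule integral_mono) (use int pointwise in \<open>simp_all add: powr_divide\<close>)
  also have "\<dots> = (a + b) powr r * (a / (a + b) * ((\<integral>x. F x powr r \<partial>M) / a powr r)
      + b / (a + b) * ((\<integral>x. G x powr r \<partial>M) / b powr r))"
    using int by (simp add: powr_divide)
  also have "\<dots> \<le> (a + b) powr r * (a / (a + b) * 1 + b / (a + b) * 1)"
    using intF intG ab by (intro mult_left_mono add_mono) auto
  also have "\<dots> = (a + b) powr r"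
    using ab by (simp add: add_divide_distrib[symmetric])
  finally have "Lnorm M r H \<le> a + b"
    using r ab by (simp add: Lnorm_le_iff)
  then show "Lnorm M r H \<le> Lnorm M r F + Lnorm M r G + e"
    by (simp add: a_def b_def)
qed

lemma Lnorm_reverse_triangle_ineq:
  fixes F G :: "'a \<Rightarrow> real"
  assumes r: "0 < r" "r \<le> 1" and [measurable]: "F \<in> borel_measurable M" "G \<in> borel_measurable M"
    and nonneg: "\<And>x. 0 \<le> F x" "\<And>x. 0 \<le> G x"
    and int: "integrable M (\<lambda>x. F x powr r)" "integrable M (\<lambda>x. G x powr r)"
  shows "Lnorm M r F + Lnorm M r G \<le> Lnorm M r (\<lambda>x. F x + G x)"
proof -
  have intFG: "integrable M (\<lambda>x. (F x + G x) powr r)"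
    using r(1) by (intro integrable_powr_le_add[OF _ _ nonneg _ _ int]) (simp_all add: nonneg add_nonneg_nonneg)
  have mono: "Lnorm M r F \<le> Lnorm M r (\<lambda>x. F x + G x)" "Lnorm M r G \<le> Lnorm M r (\<lambda>x. F x + G x)"
    using r(1) nonneg int intFG by (simp_all add: Lnorm_mono)
  define a where "a = Lnorm M r F"
  define b where "b = Lnorm M r G"
  consider "a = 0" | "b = 0" | "0 < a" "0 < b"
    using Lnorm_nonneg[of M r F] Lnorm_nonneg[of M r G] unfolding a_def b_def by linarith
  then show ?thesis
  proof cases
    case 3
    have intF: "(\<integral>x. F x powr r \<partial>M) = a powr r" and intG: "(\<integral>x. G x powr r \<partial>M) = b powr r"
      using r by (simp_all add: Lnorm_powr a_def b_def)
    have pointwise: "(a + b) powr r * (a / (a + b) * (F x / a) powr r + b / (a + b) * (G x / b) powr r)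
        \<le> (F x + G x) powr r" for x
    proof -
      have "(a + b) powr r * (a / (a + b) * (F x / a) powr r + b / (a + b) * (G x / b) powr r)
          \<le> (a + b) powr r * (a / (a + b) * (F x / a) + b / (a + b) * (G x / b)) powr r"
        using r 3 nonneg
        by (intro mult_left_mono powr_convex_combination_ge) (simp_all add: add_divide_distrib[symmetric])
      also have "\<dots> = ((a + b) * (a / (a + b) * (F x / a) + b / (a + b) * (G x / b))) powr r"
        using 3 nonneg by (simp add: powr_mult)
      also have "(a + b) * (a / (a + b) * (F x / a) + b / (a + b) * (G x / b)) = F x + G x"
        using 3 by (simp add: distrib_left)
      finally show ?thesis .
    qed
    have "(a + b) powr r = (a + b) powr r * (a / (a + b) * ((\<integral>x. F x powr r \<partial>M) / a powr r)
        + b / (a + b) * ((\<integral>x. G x powr r \<partial>M) / b powr r))"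
      using 3 by (simp add: intF intG add_divide_distrib[symmetric])
    also have "\<dots> = (\<integral>x. (a + b) powr r * (a / (a + b) * (F x / a) powr r + b / (a + b) * (G x / b) powr r) \<partial>M)"
      using int by (simp add: powr_divide)
    also have "\<dots> \<le> (\<integral>x. (F x + G x) powr r \<partial>M)"
      by (rule integral_mono[OF _ intFG]) (use int pointwise in \<open>simp_all add: powr_divide\<close>)
    finally show ?thesis
      using r 3 by (simp add: le_Lnorm_iff a_def b_def)
  qed (use mono in \<open>simp_all add: a_def b_def\<close>)
qed

lemma sum_Lnorm_le_Lnorm_sum:
  fixes F :: "'i \<Rightarrow> 'a \<Rightarrow> real"
  assumes r: "0 < r" "r \<le> 1" and "finite I"
    and "\<And>i. i \<in> I \<Longrightarrow> F i \<in> borel_measurable M" "\<And>i x. i \<in> I \<Longrightarrow> 0 \<le> F i x"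
    and "\<And>i. i \<in> I \<Longrightarrow> integrable M (\<lambda>x. F i x powr r)"
  shows "(\<Sum>i\<in>I. Lnorm M r (F i)) \<le> Lnorm M r (\<lambda>x. \<Sum>i\<in>I. F i x)"
  using assms(3-)
proof (induction I rule: finite_induct)
  case empty
  show ?case
    using r by (simp add: Lnorm_def)
next
  case (insert j I)
  have "(\<Sum>i\<in>insert j I. Lnorm M r (F i)) \<le> Lnorm M r (F j) + Lnorm M r (\<lambda>x. \<Sum>i\<in>I. F i x)"
    using insert by simp
  also have "\<dots> \<le> Lnorm M r (\<lambda>x. F j x + (\<Sum>i\<in>I. F i x))"
    using insert.prems
    by (intro Lnorm_reverse_triangle_ineq r borel_measurable_sum integrable_sum_powr sum_nonneg
        \<open>finite I\<close>) auto
  finally show ?case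
    using insert by simp
qed

section \<open>The space \<open>L\<^sup>p(\<real>)\<close> and unconditional frames\<close>

lemma Lp_norm_eq_Lnorm: "Lp_norm p f = Lnorm lborel p (\<lambda>x. cmod (f x))"
  by (simp add: Lp_norm_def Lnorm_def)

lemma Lp_zero: "(\<lambda>x. 0) \<in> Lp p"
  by (simp add: Lp_def)

lemma Lp_cmult:
  assumes "f \<in> Lp p"
  shows "(\<lambda>x. c * f x) \<in> Lp p"
proof -
  have [measurable]: "f \<in> borel_measurable lborel"
    using assms by (simp add: Lp_def)
  have "(\<lambda>x. c * f x) \<in> borel_measurable lborel"
    by measurable
  with assms show ?thesis
    by (simp add: Lp_def norm_mult powr_mult)
qed

lemma Lp_add:
  assumes "0 < p" "f \<in> Lp p" "h \<in> Lp p"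
  shows "(\<lambda>x. f x + h x) \<in> Lp p"
proof -
  have [measurable]: "f \<in> borel_measurable lborel" "h \<in> borel_measurable lborel"
    using assms by (simp_all add: Lp_def)
  have "integrable lborel (\<lambda>x. cmod (f x + h x) powr p)"
    by (rule integrable_powr_le_add[where F = "\<lambda>x. cmod (f x)" and G = "\<lambda>x. cmod (h x)"])
      (use assms in \<open>simp_all add: Lp_def norm_triangle_ineq\<close>)
  then show ?thesis
    by (simp add: Lp_def)
qed

lemma Lp_diff:
  assumes "0 < p" "f \<in> Lp p" "h \<in> Lp p"
  shows "(\<lambda>x. f x - h x) \<in> Lp p"
  using Lp_add[OF assms(1,2) Lp_cmult[OF assms(3), of "-1"]] by simp

lemma Lp_sum:
  assumes "0 < p" "finite I" "\<And>i. i \<in> I \<Longrightarrow> f i \<in> Lp p"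
  shows "(\<lambda>x. \<Sum>i\<in>I. f i x) \<in> Lp p"
  using assms(2,3)
  by (induction I rule: finite_induct) (simp_all add: Lp_zero Lp_add[OF assms(1)])

lemma Lp_norm_cmult:
  assumes "0 < p"
  shows "Lp_norm p (\<lambda>x. c * f x) = cmod c * Lp_norm p f"
  using assms by (simp add: Lp_norm_def norm_mult powr_mult powr_powr integral_nonneg_AE)

lemma Lp_norm_minus_commute: "Lp_norm p (\<lambda>x. f x - h x) = Lp_norm p (\<lambda>x. h x - f x)"
  by (simp add: Lp_norm_def norm_minus_commute)

lemma Lp_norm_triangle_ineq:
  assumes "1 \<le> p" "f \<in> Lp p" "h \<in> Lp p"
  shows "Lp_norm p (\<lambda>x. f x + h x) \<le> Lp_norm p f + Lp_norm p h"
proof -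
  have [measurable]: "f \<in> borel_measurable lborel" "h \<in> borel_measurable lborel"
    using assms by (simp_all add: Lp_def)
  show ?thesis
    unfolding Lp_norm_eq_Lnorm using assms
    by (intro Lnorm_triangle_ineq) (simp_all add: Lp_def norm_triangle_ineq)
qed

lemma Lp_norm_sum_le:
  assumes "1 \<le> p" "finite I" "\<And>i. i \<in> I \<Longrightarrow> f i \<in> Lp p"
  shows "Lp_norm p (\<lambda>x. \<Sum>i\<in>I. f i x) \<le> (\<Sum>i\<in>I. Lp_norm p (f i))"
  using assms(2,3)
proof (induction I rule: finite_induct)
  case (insert j I)
  have "Lp_norm p (\<lambda>x. f j x + (\<Sum>i\<in>I. f i x)) \<le> Lp_norm p (f j) + Lp_norm p (\<lambda>x. \<Sum>i\<in>I. f i x)"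
    using assms(1) insert by (intro Lp_norm_triangle_ineq Lp_sum) auto
  with insert show ?case
    by simp
qed (simp add: Lp_norm_def)

lemma Lp_uncond_conv_finite_support_norm_le:
  assumes p: "1 \<le> p" and conv: "Lp_uncond_conv p I c u y" and y: "y \<in> Lp p"
    and Q: "finite Q" "Q \<subseteq> I" and vanish: "\<And>i. i \<in> I - Q \<Longrightarrow> c i = 0"
    and u: "\<And>i. i \<in> Q \<Longrightarrow> u i \<in> Lp p"
  shows "Lp_norm p (\<lambda>x. \<Sum>i\<in>Q. c i * u i x) \<le> Lp_norm p y"
proof (rule field_le_epsilon)
  fix e :: real
  assume "0 < e"
  define z where "z x = (\<Sum>i\<in>Q. c i * u i x)" for x
  have z: "z \<in> Lp p"
    using p u Q unfolding z_def by (intro Lp_sum Lp_cmult) auto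
  obtain F0 where F0: "finite F0" "F0 \<subseteq> I"
    and close: "\<And>F. finite F \<and> F0 \<subseteq> F \<and> F \<subseteq> I \<Longrightarrow>
      Lp_norm p (\<lambda>x. y x - (\<Sum>i\<in>F. c i * u i x)) < e"
    using conv[unfolded Lp_uncond_conv_def, rule_format, OF \<open>0 < e\<close>] by blast
  have "(\<Sum>i\<in>F0 \<union> Q. c i * u i x) = z x" for x
    unfolding z_def using F0 Q vanish by (intro sum.mono_neutral_right) auto
  then have "Lp_norm p (\<lambda>x. y x - z x) < e"
    using close[of "F0 \<union> Q"] F0 Q by simp
  then have "Lp_norm p (\<lambda>x. z x - y x) < e"
    using Lp_norm_minus_commute[of p z y] by simp
  moreover have "Lp_norm p z \<le> Lp_norm p y + Lp_norm p (\<lambda>x. z x - y x)"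
    using Lp_norm_triangle_ineq[OF p y Lp_diff[OF _ z y]] p by simp
  ultimately show "Lp_norm p (\<lambda>x. \<Sum>i\<in>Q. c i * u i x) \<le> Lp_norm p y + e"
    unfolding z_def by simp
qed

lemma Lp_uncond_frame_sum_le:
  assumes p: "1 \<le> p" and frame: "Lp_uncond_frame p I u us K" and f: "f \<in> Lp p"
    and Q: "finite Q" "Q \<subseteq> I" and \<theta>: "\<And>i. i \<in> Q \<Longrightarrow> cmod (\<theta> i) \<le> 1"
  shows "Lp_norm p (\<lambda>x. \<Sum>i\<in>Q. \<theta> i * us i f * u i x) \<le> K * Lp_norm p f"
proof -
  define \<theta>' where "\<theta>' i = (if i \<in> Q then \<theta> i else 0)" for i
  have "\<forall>i\<in>I. cmod (\<theta>' i) \<le> 1"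
    using \<theta> by (simp add: \<theta>'_def)
  then obtain y where y: "y \<in> Lp p" "Lp_uncond_conv p I (\<lambda>i. \<theta>' i * us i f) u y"
    and y_le: "Lp_norm p y \<le> K * Lp_norm p f"
    using frame f unfolding Lp_uncond_frame_def by blast
  have "Lp_norm p (\<lambda>x. \<Sum>i\<in>Q. \<theta>' i * us i f * u i x) \<le> Lp_norm p y"
    using frame Q unfolding Lp_uncond_frame_def
    by (intro Lp_uncond_conv_finite_support_norm_le[OF p y(2,1)]) (auto simp: \<theta>'_def)
  also have "(\<lambda>x. \<Sum>i\<in>Q. \<theta>' i * us i f * u i x) = (\<lambda>x. \<Sum>i\<in>Q. \<theta> i * us i f * u i x)"
    by (intro ext sum.cong) (simp_all add: \<theta>'_def)
  finally show ?thesis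
    using y_le by simp
qed

lemma Lp_uncond_frame_bound_nonneg:
  assumes "1 \<le> p" "Lp_uncond_frame p I u us K" "f \<in> Lp p"
  shows "0 \<le> K * Lp_norm p f"
  using Lp_uncond_frame_sum_le[OF assms, of "{}"] by (simp add: Lp_norm_def)

lemma sum_le_twice_Lp_norm_sum:
  fixes a :: "'s \<Rightarrow> real"
  assumes p: "1 \<le> p" and F: "finite F" and v: "v \<in> Lp p" "Lp_norm p v = 1"
    and u: "\<And>s. s \<in> F \<Longrightarrow> u s \<in> Lp p" and close: "\<And>s. s \<in> F \<Longrightarrow> Lp_norm p (\<lambda>x. v x - u s x) \<le> 1 / 2"
    and a: "\<And>s. s \<in> F \<Longrightarrow> 0 \<le> a s"
  shows "(\<Sum>s\<in>F. a s) \<le> 2 * Lp_norm p (\<lambda>x. \<Sum>s\<in>F. of_real (a s) * u s x)"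
proof -
  define A where "A = (\<Sum>s\<in>F. a s)"
  have "0 \<le> A"
    unfolding A_def using a by (intro sum_nonneg) auto
  have diff: "(\<lambda>x. v x - u s x) \<in> Lp p" if "s \<in> F" for s
    using p v u[OF that] by (intro Lp_diff) auto
  have "of_real A * v x = (\<Sum>s\<in>F. of_real (a s) * u s x) + (\<Sum>s\<in>F. of_real (a s) * (v x - u s x))" for x
    by (simp add: A_def sum_distrib_left algebra_simps flip: sum.distrib)
  then have "A = Lp_norm p (\<lambda>x. (\<Sum>s\<in>F. of_real (a s) * u s x) + (\<Sum>s\<in>F. of_real (a s) * (v x - u s x)))"
    using Lp_norm_cmult[of p "of_real A" v] p v \<open>0 \<le> A\<close> by simp
  also have "\<dots> \<le> Lp_norm p (\<lambda>x. \<Sum>s\<in>F. of_real (a s) * u s x)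
      + Lp_norm p (\<lambda>x. \<Sum>s\<in>F. of_real (a s) * (v x - u s x))"
    using p F u diff by (intro Lp_norm_triangle_ineq Lp_sum Lp_cmult) auto
  also have "Lp_norm p (\<lambda>x. \<Sum>s\<in>F. of_real (a s) * (v x - u s x)) \<le> (\<Sum>s\<in>F. a s * (1 / 2))"
  proof -
    have "Lp_norm p (\<lambda>x. \<Sum>s\<in>F. of_real (a s) * (v x - u s x))
        \<le> (\<Sum>s\<in>F. Lp_norm p (\<lambda>x. of_real (a s) * (v x - u s x)))"
      using p F diff by (intro Lp_norm_sum_le Lp_cmult) auto
    also have "\<dots> = (\<Sum>s\<in>F. a s * Lp_norm p (\<lambda>x. v x - u s x))"
      using p a by (intro sum.cong) (simp_all add: Lp_norm_cmult)
    also have "\<dots> \<le> (\<Sum>s\<in>F. a s * (1 / 2))"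
      using a close by (intro sum_mono mult_left_mono) auto
    finally show ?thesis .
  qed
  finally show ?thesis
    by (simp add: A_def sum_divide_distrib[symmetric])
qed

section \<open>Khintchine's inequality and cotype 2\<close>

text \<open>\<open>sign_avg \<phi> as c\<close> is the mean of \<open>\<phi> (c \<plusminus> a\<^sub>1 \<plusminus> \<dots> \<plusminus> a\<^sub>n)\<close> over all \<open>2 ^ n\<close> choices of
  signs, where \<open>as = [a\<^sub>1, \<dots>, a\<^sub>n]\<close>.\<close>
fun sign_avg :: "('a::ab_group_add \<Rightarrow> real) \<Rightarrow> 'a list \<Rightarrow> 'a \<Rightarrow> real" where
  "sign_avg \<phi> [] c = \<phi> c"
| "sign_avg \<phi> (a # as) c = (sign_avg \<phi> as (c + a) + sign_avg \<phi> as (c - a)) / 2"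

lemma sign_avg_linear:
  "sign_avg (\<lambda>z. \<alpha> * \<phi> z + \<beta> * \<psi> z) as c = \<alpha> * sign_avg \<phi> as c + \<beta> * sign_avg \<psi> as c"
  by (induction as arbitrary: c) (simp_all add: field_simps)

lemma sign_avg_mono:
  assumes "\<And>z. \<phi> z \<le> \<psi> z"
  shows "sign_avg \<phi> as c \<le> sign_avg \<psi> as c"
  using assms by (induction as arbitrary: c) (auto intro!: divide_right_mono add_mono)

lemma sign_avg_nonneg:
  assumes "\<And>z. 0 \<le> \<phi> z"
  shows "0 \<le> sign_avg \<phi> as c"
  using assms by (induction as arbitrary: c) auto

lemma norm_add_diff_power2:
  fixes c a :: "'a::real_inner"
  shows "(norm (c + a))\<^sup>2 = (norm c)\<^sup>2 + (norm a)\<^sup>2 + 2 * inner c a"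
    and "(norm (c - a))\<^sup>2 = (norm c)\<^sup>2 + (norm a)\<^sup>2 - 2 * inner c a"
  by (simp_all add: power2_norm_eq_inner inner_add inner_diff inner_commute)

lemma sign_avg_norm_power2:
  fixes as :: "'a::real_inner list"
  shows "sign_avg (\<lambda>z. (norm z)\<^sup>2) as c = (norm c)\<^sup>2 + (\<Sum>a\<leftarrow>as. (norm a)\<^sup>2)"
  by (induction as arbitrary: c) (simp_all add: norm_add_diff_power2 inner_commute field_simps)

lemma sign_avg_norm_power4_le:
  fixes as :: "'a::real_inner list"
  shows "sign_avg (\<lambda>z. norm z ^ 4) as c
    \<le> norm c ^ 4 + 6 * (norm c)\<^sup>2 * (\<Sum>a\<leftarrow>as. (norm a)\<^sup>2) + 3 * (\<Sum>a\<leftarrow>as. (norm a)\<^sup>2)\<^sup>2"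
proof (induction as arbitrary: c)
  case (Cons a as)
  define A where "A = (\<Sum>a\<leftarrow>as. (norm a)\<^sup>2)"
  define u where "u = (norm c)\<^sup>2 + (norm a)\<^sup>2"
  define w where "w = 2 * inner c a"
  have sq: "(norm (c + a))\<^sup>2 = u + w" "(norm (c - a))\<^sup>2 = u - w"
    by (simp_all add: u_def w_def norm_add_diff_power2)
  have "x ^ 4 = (x\<^sup>2)\<^sup>2" for x :: real
    by (simp add: power4_eq_xxxx power2_eq_square)
  then have fourth: "norm (c + a) ^ 4 = (u + w)\<^sup>2" "norm (c - a) ^ 4 = (u - w)\<^sup>2"
    by (simp_all only: sq)
  have w: "w\<^sup>2 \<le> 4 * (norm c)\<^sup>2 * (norm a)\<^sup>2"
    using Cauchy_Schwarz_ineq[of c a] by (simp add: w_def power2_norm_eq_inner power_mult_distrib)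
  have "0 \<le> A"
    unfolding A_def by (intro sum_list_nonneg) auto
  have "sign_avg (\<lambda>z. norm z ^ 4) (a # as) c
      \<le> ((u + w)\<^sup>2 + 6 * (u + w) * A + 3 * A\<^sup>2 + ((u - w)\<^sup>2 + 6 * (u - w) * A + 3 * A\<^sup>2)) / 2"
    using Cons.IH[of "c + a"] Cons.IH[of "c - a"] by (simp add: sq fourth A_def)
  also have "\<dots> = u\<^sup>2 + w\<^sup>2 + 6 * u * A + 3 * A\<^sup>2"
    by (simp add: power2_eq_square algebra_simps)
  also have "\<dots> \<le> norm c ^ 4 + 6 * (norm c)\<^sup>2 * ((norm a)\<^sup>2 + A) + 3 * ((norm a)\<^sup>2 + A)\<^sup>2"
  proof -
    have "norm c ^ 4 + 6 * (norm c)\<^sup>2 * ((norm a)\<^sup>2 + A) + 3 * ((norm a)\<^sup>2 + A)\<^sup>2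
        - (u\<^sup>2 + w\<^sup>2 + 6 * u * A + 3 * A\<^sup>2)
        = 2 * norm a ^ 4 + (4 * (norm c)\<^sup>2 * (norm a)\<^sup>2 - w\<^sup>2)"
      by (simp add: u_def power2_eq_square power4_eq_xxxx algebra_simps)
    moreover have "0 \<le> norm a ^ 4"
      by simp
    ultimately show ?thesis
      using w by linarith
  qed
  finally show ?case
    by (simp add: A_def)
qed simp

lemma powr_ge_quadratic_minorant:
  fixes y M r :: real
  assumes "0 \<le> y" "0 < M" "0 < r" "r \<le> 1"
  shows "M powr (r - 1) * (y - y\<^sup>2 / M) \<le> y powr r"
proof (cases "y \<le> M")
  case True
  show ?thesis
  proof (cases "y = 0")
    case False
    then have "0 < y"
      using assms by simp
    have "M powr (r - 1) * (y - y\<^sup>2 / M) \<le> M powr (r - 1) * y"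
      using assms by (intro mult_left_mono) auto
    also have "\<dots> \<le> y powr (r - 1) * y"
      using True \<open>0 < y\<close> assms by (intro mult_right_mono powr_mono2') auto
    also have "\<dots> = y powr r"
      using \<open>0 < y\<close> by (simp add: powr_diff)
    finally show ?thesis .
  qed simp
next
  case False
  then have "y - y\<^sup>2 / M \<le> 0"
    using assms by (simp add: power2_eq_square field_simps)
  then have "M powr (r - 1) * (y - y\<^sup>2 / M) \<le> 0"
    by (simp add: mult_nonneg_nonpos)
  then show ?thesis
    using powr_ge_zero[of y r] by linarith
qed

lemma power2_powr_half:
  fixes x p :: real
  assumes "0 \<le> x"
  shows "(x\<^sup>2) powr (p / 2) = x powr p"
  using assms powr_powr[of x 2 "p / 2"] by simp

text \<open>The quadratic minorant with \<open>M = 6 A\<close> reduces the bound to the second moment \<open>A\<close> of the signed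
  sum and to its fourth moment, which is at most \<open>3 A\<^sup>2\<close>.\<close>
lemma khintchine_lower_bound:
  fixes as :: "'a::real_inner list"
  assumes p: "0 < p" "p \<le> 2"
  shows "(\<Sum>a\<leftarrow>as. (norm a)\<^sup>2) powr (p / 2) / 12 \<le> sign_avg (\<lambda>z. norm z powr p) as 0"
proof -
  define A where "A = (\<Sum>a\<leftarrow>as. (norm a)\<^sup>2)"
  define r where "r = p / 2"
  have r: "0 < r" "r \<le> 1"
    using p by (simp_all add: r_def)
  have "0 \<le> A"
    unfolding A_def by (intro sum_list_nonneg) auto
  show ?thesis
  proof (cases "A = 0")
    case True
    then show ?thesis
      by (simp add: A_def[symmetric] sign_avg_nonneg)
  next
    case False
    with \<open>0 \<le> A\<close> have "0 < A"
      by simp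
    define M where "M = 6 * A"
    define m where "m = M powr (r - 1)"
    have "m * (norm z)\<^sup>2 + (- m / M) * norm z ^ 4 \<le> norm z powr p" for z :: 'a
    proof -
      have "m * ((norm z)\<^sup>2 - ((norm z)\<^sup>2)\<^sup>2 / M) \<le> ((norm z)\<^sup>2) powr r"
        unfolding m_def using \<open>0 < A\<close> r by (intro powr_ge_quadratic_minorant) (auto simp: M_def)
      moreover have "((norm z)\<^sup>2) powr r = norm z powr p"
        by (simp add: r_def power2_powr_half)
      moreover have "((norm z)\<^sup>2)\<^sup>2 = norm z ^ 4"
        by (simp flip: power_mult)
      ultimately show ?thesis
        by (simp add: algebra_simps)
    qed
    then have "sign_avg (\<lambda>z. m * (norm z)\<^sup>2 + (- m / M) * norm z ^ 4) as 0
        \<le> sign_avg (\<lambda>z. norm z powr p) as 0"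
      by (rule sign_avg_mono)
    moreover have "sign_avg (\<lambda>z. m * (norm z)\<^sup>2 + (- m / M) * norm z ^ 4) as 0
        = m * A + (- m / M) * sign_avg (\<lambda>z. norm z ^ 4) as 0"
      by (subst sign_avg_linear) (simp add: sign_avg_norm_power2 A_def)
    moreover have "(- m / M) * (3 * A\<^sup>2) \<le> (- m / M) * sign_avg (\<lambda>z. norm z ^ 4) as 0"
      using sign_avg_norm_power4_le[of as 0] \<open>0 < A\<close>
      by (intro mult_left_mono_neg) (simp_all add: A_def m_def M_def)
    moreover have "m * A + (- m / M) * (3 * A\<^sup>2) = 6 powr (r - 1) / 2 * A powr r"
      using \<open>0 < A\<close> by (simp add: m_def M_def powr_mult powr_diff power2_eq_square field_simps)
    moreover have "1 / 12 \<le> 6 powr (r - 1) / 2"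
      using powr_mono[of "-1" "r - 1" 6] r by (simp add: powr_minus_divide)
    then have "A powr r / 12 \<le> 6 powr (r - 1) / 2 * A powr r"
      using mult_right_mono[of "1 / 12" "6 powr (r - 1) / 2" "A powr r"] by simp
    ultimately show ?thesis
      by (simp add: A_def r_def)
  qed
qed

lemma integral_sign_avg_le:
  fixes W :: "'k \<Rightarrow> 'a \<Rightarrow> 'b::ab_group_add"
  assumes "distinct ks"
    and "\<And>\<epsilon>. integrable M (\<lambda>x. \<phi> (c x + (\<Sum>k\<in>set ks. if \<epsilon> k then W k x else - W k x)))"
    and "\<And>\<epsilon>. (\<integral>x. \<phi> (c x + (\<Sum>k\<in>set ks. if \<epsilon> k then W k x else - W k x)) \<partial>M) \<le> R"
  shows "integrable M (\<lambda>x. sign_avg \<phi> (map (\<lambda>k. W k x) ks) (c x))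
    \<and> (\<integral>x. sign_avg \<phi> (map (\<lambda>k. W k x) ks) (c x) \<partial>M) \<le> R"
  using assms
proof (induction ks arbitrary: c)
  case (Cons j ks)
  have split: "(\<Sum>k\<in>set (j # ks). if (\<epsilon>(j := b)) k then W k x else - W k x)
      = (if b then W j x else - W j x) + (\<Sum>k\<in>set ks. if \<epsilon> k then W k x else - W k x)" for \<epsilon> b x
    using Cons.prems(1) by (auto intro!: sum.cong)
  have plus: "integrable M (\<lambda>x. sign_avg \<phi> (map (\<lambda>k. W k x) ks) (c x + W j x))
      \<and> (\<integral>x. sign_avg \<phi> (map (\<lambda>k. W k x) ks) (c x + W j x) \<partial>M) \<le> R"
    using Cons.prems(2,3)[of "\<epsilon>(j := True)" for \<epsilon>] Cons.prems(1)
    by (intro Cons.IH) (simp_all only: split if_True add.assoc distinct.simps)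
  have minus: "integrable M (\<lambda>x. sign_avg \<phi> (map (\<lambda>k. W k x) ks) (c x - W j x))
      \<and> (\<integral>x. sign_avg \<phi> (map (\<lambda>k. W k x) ks) (c x - W j x) \<partial>M) \<le> R"
    using Cons.prems(2,3)[of "\<epsilon>(j := False)" for \<epsilon>] Cons.prems(1)
    by (intro Cons.IH) (simp_all only: split if_False add.assoc diff_conv_add_uminus distinct.simps)
  from plus minus show ?case
    by simp
qed simp

text \<open>Cotype 2 of \<open>L\<^sup>p\<close> for \<open>0 < p \<le> 2\<close>: integrating Khintchine's inequality pointwise bounds the
  \<open>L\<^sup>p\<^sup>/\<^sup>2\<close> quasi-norm of \<open>\<Sum>\<^sub>k \<bar>W\<^sub>k\<bar>\<^sup>2\<close> by the signed sums, and the reverse Minkowski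
  inequality in \<open>L\<^sup>p\<^sup>/\<^sup>2\<close> splits it into \<open>\<Sum>\<^sub>k \<parallel>W\<^sub>k\<parallel>\<^sub>p\<^sup>2\<close>.\<close>
lemma sum_Lnorm_power2_le_sign_sums:
  fixes W :: "'k \<Rightarrow> 'a \<Rightarrow> 'b::real_inner"
  assumes p: "0 < p" "p \<le> 2" and P: "finite P"
    and meas: "\<And>k. k \<in> P \<Longrightarrow> W k \<in> borel_measurable M"
    and int: "\<And>k. k \<in> P \<Longrightarrow> integrable M (\<lambda>x. norm (W k x) powr p)"
    and int_signed: "\<And>\<epsilon>. integrable M (\<lambda>x. norm (\<Sum>k\<in>P. if \<epsilon> k then W k x else - W k x) powr p)"
    and bound: "\<And>\<epsilon>. Lnorm M p (\<lambda>x. norm (\<Sum>k\<in>P. if \<epsilon> k then W k x else - W k x)) \<le> X"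
  shows "(\<Sum>k\<in>P. (Lnorm M p (\<lambda>x. norm (W k x)))\<^sup>2) \<le> 12 powr (2 / p) * X\<^sup>2"
proof -
  have "0 \<le> X"
    using bound Lnorm_nonneg order_trans by blast
  obtain ks where ks: "set ks = P" "distinct ks"
    using finite_distinct_list[OF P] by blast
  define F where "F k x = (norm (W k x))\<^sup>2" for k x
  have F_powr: "F k x powr (p / 2) = norm (W k x) powr p" for k x
    by (simp add: F_def power2_powr_half)
  have F_meas: "F k \<in> borel_measurable M" if "k \<in> P" for k
    using meas[OF that] unfolding F_def by measurable
  have int_F: "integrable M (\<lambda>x. F k x powr (p / 2))" if "k \<in> P" for k
    using int[OF that] by (simp add: F_powr)
  have int_sum_F: "integrable M (\<lambda>x. (\<Sum>k\<in>P. F k x) powr (p / 2))"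
    using p by (intro integrable_sum_powr[OF _ P F_meas _ int_F]) (simp_all add: F_def)
  have Lnorm_F: "Lnorm M (p / 2) (F k) = (Lnorm M p (\<lambda>x. norm (W k x)))\<^sup>2" for k
    using p by (simp add: Lnorm_def F_powr powr_powr integral_nonneg_AE flip: powr_realpow' powr_add)
  have khintchine: "(\<Sum>k\<in>P. F k x) powr (p / 2) \<le> 12 * sign_avg (\<lambda>z. norm z powr p) (map (\<lambda>k. W k x) ks) 0"
    for x
    using khintchine_lower_bound[OF p, of "map (\<lambda>k. W k x) ks"] ks
    by (simp add: F_def sum_list_distinct_conv_sum_set o_def)
  have "integrable M (\<lambda>x. sign_avg (\<lambda>z. norm z powr p) (map (\<lambda>k. W k x) ks) 0)
      \<and> (\<integral>x. sign_avg (\<lambda>z. norm z powr p) (map (\<lambda>k. W k x) ks) 0 \<partial>M) \<le> X powr p"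
    using ks int_signed bound p \<open>0 \<le> X\<close>
    by (intro integral_sign_avg_le[where c = "\<lambda>x. 0", simplified]) (simp_all add: Lnorm_le_iff)
  then have "(\<integral>x. (\<Sum>k\<in>P. F k x) powr (p / 2) \<partial>M) \<le> 12 * X powr p"
    using integral_mono[OF int_sum_F _ khintchine] by simp
  then have "Lnorm M (p / 2) (\<lambda>x. \<Sum>k\<in>P. F k x) \<le> (12 * X powr p) powr (2 / p)"
    using p \<open>0 \<le> X\<close> by (simp add: Lnorm_le_iff powr_powr)
  also have "\<dots> = 12 powr (2 / p) * X\<^sup>2"
    using p \<open>0 \<le> X\<close> by (simp add: powr_mult powr_powr)
  finally show ?thesis
    using sum_Lnorm_le_Lnorm_sum[of "p / 2" P F M] p P F_meas int_F
    by (simp add: Lnorm_F F_def)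
qed

section \<open>Time-frequency shifts\<close>

lemma cmod_expo [simp]: "cmod (expo s x) = 1"
  by (simp add: expo_def)

lemma expo_measurable [measurable]: "expo s \<in> borel_measurable borel"
  unfolding expo_def by (intro borel_measurable_continuous_onI continuous_intros)

lemma expo_zero [simp]: "expo 0 x = 1"
  by (simp add: expo_def)

lemma expo_shift: "expo \<sigma> (- t) * expo (s + \<sigma>) x = expo s x * expo \<sigma> (x - t)"
  unfolding expo_def by (simp add: exp_add[symmetric] algebra_simps)

lemma integral_lborel_translate:
  fixes F :: "real \<Rightarrow> real"
  shows "(\<integral>x. F (x - t) \<partial>lborel) = (\<integral>x. F x \<partial>lborel)"
  using lborel_integral_real_affine[of 1 F "- t"] by simp

lemma modulated_translate_Lp:
  assumes "g \<in> Lp p"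
  shows "(\<lambda>x. expo s x * transl t g x) \<in> Lp p"
proof -
  have [measurable]: "g \<in> borel_measurable lborel"
    using assms by (simp add: Lp_def)
  have "(\<lambda>x. expo s x * g (x - t)) \<in> borel_measurable lborel"
    by measurable
  moreover have "integrable lborel (\<lambda>x. cmod (g (x - t)) powr p)"
    using assms lborel_integrable_real_affine_iff[of 1 "\<lambda>x. cmod (g x) powr p" "- t"]
    by (simp add: Lp_def)
  ultimately show ?thesis
    by (simp add: Lp_def transl_def norm_mult)
qed

lemma Lp_norm_modulated_translate: "Lp_norm p (\<lambda>x. expo s x * transl t g x) = Lp_norm p g"
  using integral_lborel_translate[of "\<lambda>x. cmod (g x) powr p" t]
  by (simp add: Lp_norm_def transl_def norm_mult)

lemma Lp_norm_modulation_defect: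
  "Lp_norm p (\<lambda>x. expo s x * transl t g x - expo \<sigma> (- t) * (expo (s + \<sigma>) x * transl t g x))
    = (\<integral>y. cmod (g y) powr p * cmod (expo \<sigma> y - 1) powr p \<partial>lborel) powr (1 / p)"
proof -
  have "expo s x * transl t g x - expo \<sigma> (- t) * (expo (s + \<sigma>) x * transl t g x)
      = - (expo s x * (g (x - t) * (expo \<sigma> (x - t) - 1)))" for x
  proof -
    have "expo \<sigma> (- t) * (expo (s + \<sigma>) x * transl t g x) = (expo \<sigma> (- t) * expo (s + \<sigma>) x) * g (x - t)"
      by (simp add: transl_def mult.assoc)
    also have "\<dots> = expo s x * expo \<sigma> (x - t) * g (x - t)"
      by (simp only: expo_shift)
    finally have shift: "expo \<sigma> (- t) * (expo (s + \<sigma>) x * transl t g x) = expo s x * expo \<sigma> (x - t) * g (x - t)" .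
    show ?thesis
      unfolding shift by (simp add: transl_def algebra_simps)
  qed
  then have "cmod (expo s x * transl t g x - expo \<sigma> (- t) * (expo (s + \<sigma>) x * transl t g x)) powr p
      = cmod (g (x - t)) powr p * cmod (expo \<sigma> (x - t) - 1) powr p" for x
    by (simp add: norm_mult powr_mult)
  then show ?thesis
    using integral_lborel_translate[of "\<lambda>y. cmod (g y) powr p * cmod (expo \<sigma> y - 1) powr p" t]
    by (simp add: Lp_norm_def)
qed

section \<open>Exhausting unordered sums by finite blocks\<close>

lemma sum_power2_Sup_le:
  fixes D :: "'k \<Rightarrow> real set"
  assumes "finite P" "\<And>k. k \<in> P \<Longrightarrow> D k \<noteq> {}" "\<And>k d. k \<in> P \<Longrightarrow> d \<in> D k \<Longrightarrow> 0 \<le> d"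
    and "\<And>d. (\<And>k. k \<in> P \<Longrightarrow> d k \<in> D k) \<Longrightarrow> (\<Sum>k\<in>P. (d k)\<^sup>2) \<le> B"
  shows "(\<Sum>k\<in>P. (Sup (D k))\<^sup>2) \<le> B"
  using assms
proof (induction P arbitrary: B rule: finite_induct)
  case empty
  then show ?case
    by simp
next
  case (insert j P)
  define R where "R = (\<Sum>k\<in>P. (Sup (D k))\<^sup>2)"
  have bound: "x\<^sup>2 \<le> B - R" if x: "x \<in> D j" for x
  proof -
    have "R \<le> B - x\<^sup>2"
      unfolding R_def
    proof (rule insert.IH)
      fix d
      assume d: "\<And>k. k \<in> P \<Longrightarrow> d k \<in> D k"
      have "(\<Sum>k\<in>insert j P. ((d(j := x)) k)\<^sup>2) \<le> B"
        using d x insert.hyps(2) by (intro insert.prems(3)) auto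
      moreover have "(\<Sum>k\<in>P. ((d(j := x)) k)\<^sup>2) = (\<Sum>k\<in>P. (d k)\<^sup>2)"
        using insert.hyps(2) by (intro sum.cong) auto
      ultimately show "(\<Sum>k\<in>P. (d k)\<^sup>2) \<le> B - x\<^sup>2"
        using insert.hyps by simp
    qed (use insert.prems in auto)
    then show ?thesis
      by simp
  qed
  have le_sqrt: "x \<le> sqrt (B - R)" if "x \<in> D j" for x
    using bound[OF that] by (simp add: real_le_rsqrt)
  obtain x0 where "x0 \<in> D j"
    using insert.prems(1) by blast
  then have "0 \<le> Sup (D j)"
    using insert.prems(2) le_sqrt by (meson bdd_aboveI cSup_upper insertI1 order_trans)
  moreover have "Sup (D j) \<le> sqrt (B - R)"
    using insert.prems(1) le_sqrt by (intro cSup_least) auto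
  moreover have "0 \<le> B - R"
    using bound[OF \<open>x0 \<in> D j\<close>] by (meson order_trans zero_le_power2)
  ultimately have "(Sup (D j))\<^sup>2 \<le> B - R"
    by (metis power_mono real_sqrt_pow2)
  then show ?case
    using insert.hyps by (simp add: R_def)
qed

lemma ennreal_infsum:
  fixes f :: "'a \<Rightarrow> real"
  assumes "f summable_on A" "\<And>x. x \<in> A \<Longrightarrow> 0 \<le> f x"
  shows "(\<Sum>\<^sub>\<infinity>x\<in>A. ennreal (f x)) = ennreal (\<Sum>\<^sub>\<infinity>x\<in>A. f x)"
proof -
  have "(\<Sum>\<^sub>\<infinity>x\<in>A. ennreal (f x)) = (SUP F\<in>{F. finite F \<and> F \<subseteq> A}. sum (\<lambda>x. ennreal (f x)) F)"
    by (rule nonneg_infsum_complete) simp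
  also have "\<dots> = (SUP F\<in>{F. finite F \<and> F \<subseteq> A}. ennreal (sum f F))"
    using assms(2) by (intro SUP_cong refl) (auto intro!: sum_ennreal)
  also have "\<dots> = ennreal (\<Sum>\<^sub>\<infinity>x\<in>A. f x)"
    using infsum_nonneg_is_SUPREMUM_ennreal[OF assms] by simp
  finally show ?thesis .
qed

lemma sum_infsum_ennreal:
  fixes H :: "'a \<Rightarrow> 'b \<Rightarrow> ennreal"
  assumes "finite A"
  shows "(\<Sum>a\<in>A. \<Sum>\<^sub>\<infinity>b\<in>B. H a b) = (\<Sum>\<^sub>\<infinity>b\<in>B. \<Sum>a\<in>A. H a b)"
  using assms
proof (induction A rule: finite_induct)
  case (insert a A)
  then show ?case
    using infsum_add[of "H a" B "\<lambda>b. \<Sum>a\<in>A. H a b"] by (simp add: nonneg_summable_on_complete)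
qed simp

lemma double_infsum_ennreal_le:
  fixes Z :: "'a \<Rightarrow> 'b \<Rightarrow> real"
  assumes "\<And>a b. 0 \<le> Z a b"
    and "\<And>A0 B0. finite A0 \<Longrightarrow> A0 \<subseteq> A \<Longrightarrow> finite B0 \<Longrightarrow> B0 \<subseteq> B \<Longrightarrow> (\<Sum>a\<in>A0. \<Sum>b\<in>B0. Z a b) \<le> C"
  shows "(\<Sum>\<^sub>\<infinity>a\<in>A. \<Sum>\<^sub>\<infinity>b\<in>B. ennreal (Z a b)) \<le> ennreal C"
proof (rule infsum_le_finite_sums)
  fix A0
  assume A0: "finite A0" "A0 \<subseteq> A"
  have "(\<Sum>\<^sub>\<infinity>b\<in>B. \<Sum>a\<in>A0. ennreal (Z a b)) \<le> ennreal C"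
  proof (rule infsum_le_finite_sums)
    fix B0
    assume B0: "finite B0" "B0 \<subseteq> B"
    have "(\<Sum>b\<in>B0. \<Sum>a\<in>A0. ennreal (Z a b)) = ennreal (\<Sum>a\<in>A0. \<Sum>b\<in>B0. Z a b)"
      using assms(1) by (simp add: sum_nonneg sum.swap[of _ B0])
    also have "\<dots> \<le> ennreal C"
      using assms(2)[OF A0 B0] by (rule ennreal_leI)
    finally show "(\<Sum>b\<in>B0. \<Sum>a\<in>A0. ennreal (Z a b)) \<le> ennreal C" .
  qed (simp add: nonneg_summable_on_complete)
  then show "(\<Sum>a\<in>A0. \<Sum>\<^sub>\<infinity>b\<in>B. ennreal (Z a b)) \<le> ennreal C"
    by (simp add: sum_infsum_ennreal[OF A0(1)])
qed (simp add: nonneg_summable_on_complete)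

section \<open>Gabor unconditional frames\<close>

lemma cnj_sgn_mult: "cnj (sgn z) * z = complex_of_real (cmod z)"
proof (cases "z = 0")
  case False
  have "cnj (sgn z) * z = cnj z * z / complex_of_real (cmod z)"
    by (simp add: sgn_eq)
  also have "cnj z * z = complex_of_real ((cmod z)\<^sup>2)"
    by (metis complex_norm_square mult.commute)
  finally show ?thesis
    using False by (simp add: power2_eq_square)
qed simp

locale gabor_uncond_frame =
  fixes p :: real and g :: "real \<Rightarrow> complex" and T S :: "real set"
    and gs :: "real \<times> real \<Rightarrow> (real \<Rightarrow> complex) \<Rightarrow> complex" and K \<delta> :: real
  assumes p: "1 \<le> p" "p \<le> 2"
    and g: "g \<in> Lp p" "Lp_norm p g = 1"
    and frame: "Lp_uncond_frame p (T \<times> S) (\<lambda>(t, s) x. expo s x * transl t g x) gs K"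
    and \<delta>: "0 < \<delta>"
    and small_modulation:
      "(SUP \<sigma>\<in>{0<..<\<delta>}. \<integral>x. cmod (g x) powr p * cmod (expo \<sigma> x - 1) powr p \<partial>lborel) < 2 powr (- p)"
begin

definition band :: "int \<Rightarrow> real set" where
  "band l = {s \<in> S. of_int l * \<delta> \<le> s \<and> s < (of_int l + 1) * \<delta>}"

lemma floor_divide_band:
  assumes "s \<in> band l"
  shows "\<lfloor>s / \<delta>\<rfloor> = l"
  using assms \<delta> by (simp add: band_def floor_eq_iff field_simps)

lemma modulation_defect_le:
  assumes "0 \<le> \<sigma>" "\<sigma> < \<delta>"
  shows "(\<integral>x. cmod (g x) powr p * cmod (expo \<sigma> x - 1) powr p \<partial>lborel) \<le> 2 powr (- p)"
proof (cases "\<sigma> = 0")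
  case False
  have "(\<integral>x. cmod (g x) powr p * cmod (expo \<tau> x - 1) powr p \<partial>lborel) \<le> 2 powr p" for \<tau>
  proof -
    have "(\<integral>x. cmod (g x) powr p * cmod (expo \<tau> x - 1) powr p \<partial>lborel)
        \<le> (\<integral>x. 2 powr p * cmod (g x) powr p \<partial>lborel)"
    proof (rule integral_mono')
      show "integrable lborel (\<lambda>x. 2 powr p * cmod (g x) powr p)"
        using g by (simp add: Lp_def)
      fix x
      have "cmod (expo \<tau> x - 1) \<le> 2"
        using norm_triangle_ineq4[of "expo \<tau> x" 1] by simp
      then have "cmod (expo \<tau> x - 1) powr p \<le> 2 powr p"
        using p by (intro powr_mono2) auto
      then have "cmod (expo \<tau> x - 1) powr p * cmod (g x) powr p \<le> 2 powr p * cmod (g x) powr p"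
        by (rule mult_right_mono) simp
      then show "cmod (g x) powr p * cmod (expo \<tau> x - 1) powr p \<le> 2 powr p * cmod (g x) powr p"
        by (simp only: mult.commute)
    qed simp
    also have "\<dots> = 2 powr p"
      using g Lnorm_powr[of p lborel "\<lambda>x. cmod (g x)"] p by (simp add: Lp_norm_eq_Lnorm)
    finally show ?thesis .
  qed
  then have "bdd_above ((\<lambda>\<sigma>. \<integral>x. cmod (g x) powr p * cmod (expo \<sigma> x - 1) powr p \<partial>lborel) ` {0<..<\<delta>})"
    by (intro bdd_aboveI2)
  then have "(\<integral>x. cmod (g x) powr p * cmod (expo \<sigma> x - 1) powr p \<partial>lborel)
      \<le> (SUP \<sigma>\<in>{0<..<\<delta>}. \<integral>x. cmod (g x) powr p * cmod (expo \<sigma> x - 1) powr p \<partial>lborel)"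
    using False assms by (intro cSUP_upper) auto
  with small_modulation show ?thesis
    by simp
qed simp

lemma Lp_norm_modulation_defect_le:
  assumes "s \<in> band l"
  shows "Lp_norm p (\<lambda>x. expo (of_int l * \<delta>) x * transl t g x
    - expo (s - of_int l * \<delta>) (- t) * (expo s x * transl t g x)) \<le> 1 / 2"
proof -
  have \<sigma>: "0 \<le> s - of_int l * \<delta>" "s - of_int l * \<delta> < \<delta>"
    using assms by (auto simp: band_def algebra_simps)
  have "Lp_norm p (\<lambda>x. expo (of_int l * \<delta>) x * transl t g x
      - expo (s - of_int l * \<delta>) (- t) * (expo s x * transl t g x))
      = (\<integral>x. cmod (g x) powr p * cmod (expo (s - of_int l * \<delta>) x - 1) powr p \<partial>lborel) powr (1 / p)"
    using Lp_norm_modulation_defect[of p "of_int l * \<delta>" t g "s - of_int l * \<delta>"] by simp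
  also have "\<dots> \<le> (2 powr (- p)) powr (1 / p)"
    using modulation_defect_le[OF \<sigma>] p by (intro powr_mono2 integral_nonneg_AE) auto
  also have "\<dots> = 2 powr (- p * (1 / p))"
    by (rule powr_powr)
  also have "\<dots> = 1 / 2"
    using p by (simp add: powr_minus_divide)
  finally show ?thesis .
qed

text \<open>For \<open>s\<close> in band \<open>l\<close> and \<open>\<sigma> = s - l\<delta>\<close>, the factor \<open>phase t s = e\<^sub>\<sigma>(-t)\<close> turns the atom
  \<open>M\<^sub>s T\<^sub>t g\<close> into \<open>M\<^sub>l\<^sub>\<delta> T\<^sub>t (e\<^sub>\<sigma> g)\<close>, which is within \<open>1/2\<close> of \<open>M\<^sub>l\<^sub>\<delta> T\<^sub>t g\<close>.\<close>
definition phase :: "real \<Rightarrow> real \<Rightarrow> complex" where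
  "phase t s = expo (s - of_int \<lfloor>s / \<delta>\<rfloor> * \<delta>) (- t)"

definition block_sum :: "(real \<Rightarrow> complex) \<Rightarrow> real \<Rightarrow> real set \<Rightarrow> real \<Rightarrow> complex" where
  "block_sum f t F x = (\<Sum>s\<in>F. of_real (cmod (gs (t, s) f)) * (phase t s * (expo s x * transl t g x)))"

lemma block_sum_Lp:
  assumes "finite F"
  shows "block_sum f t F \<in> Lp p"
  unfolding block_sum_def[abs_def] using assms p g
  by (intro Lp_sum Lp_cmult modulated_translate_Lp) auto

lemma coefficient_sum_le_block_sum:
  assumes "finite F" "F \<subseteq> band l"
  shows "(\<Sum>s\<in>F. cmod (gs (t, s) f)) \<le> 2 * Lp_norm p (block_sum f t F)"
  unfolding block_sum_def[abs_def]
proof (rule sum_le_twice_Lp_norm_sum[where v = "\<lambda>x. expo (of_int l * \<delta>) x * transl t g x"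
      and u = "\<lambda>s x. phase t s * (expo s x * transl t g x)"])
  fix s
  assume "s \<in> F"
  with assms have "s \<in> band l"
    by blast
  then show "Lp_norm p (\<lambda>x. expo (of_int l * \<delta>) x * transl t g x - phase t s * (expo s x * transl t g x))
      \<le> 1 / 2"
    using Lp_norm_modulation_defect_le by (simp add: phase_def floor_divide_band)
qed (use p g assms in \<open>simp_all add: modulated_translate_Lp Lp_norm_modulated_translate Lp_cmult\<close>)

lemma signed_block_sums_le:
  assumes f: "f \<in> Lp p" and P: "finite P" "P \<subseteq> T \<times> UNIV"
    and F: "\<And>k. k \<in> P \<Longrightarrow> finite (F k) \<and> F k \<subseteq> band (snd k)"
  shows "Lp_norm p (\<lambda>x. \<Sum>k\<in>P. if \<epsilon> k then block_sum f (fst k) (F k) x else - block_sum f (fst k) (F k) x)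
    \<le> K * Lp_norm p f"
proof -
  define U where "U = (\<lambda>(t, s) x. expo s x * transl t g x)"
  define \<theta> where "\<theta> = (\<lambda>(t, s). (if \<epsilon> (t, \<lfloor>s / \<delta>\<rfloor>) then 1 else - 1) * phase t s * cnj (sgn (gs (t, s) f)))"
  define Q where "Q = (\<lambda>(k, s). (fst k, s)) ` Sigma P F"
  have band_index: "\<lfloor>s / \<delta>\<rfloor> = snd k" if "k \<in> P" "s \<in> F k" for k s
  proof -
    have "s \<in> band (snd k)"
      using F[OF that(1)] that(2) by blast
    then show ?thesis
      by (rule floor_divide_band)
  qed
  have inj: "inj_on (\<lambda>(k, s). (fst k, s)) (Sigma P F)"
    by (rule inj_on_inverseI[where g = "\<lambda>(t, s). ((t, \<lfloor>s / \<delta>\<rfloor>), s)"]) (auto simp: band_index)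
  have Q: "finite Q" "Q \<subseteq> T \<times> S"
    using P F by (auto simp: Q_def band_def)
  have summand: "\<theta> (t, s) * gs (t, s) f * U (t, s) x
      = (if \<epsilon> (t, \<lfloor>s / \<delta>\<rfloor>) then 1 else - 1)
        * (of_real (cmod (gs (t, s) f)) * (phase t s * (expo s x * transl t g x)))" for t s x
    by (simp add: \<theta>_def U_def mult_ac flip: cnj_sgn_mult)
  have "(\<Sum>k\<in>P. if \<epsilon> k then block_sum f (fst k) (F k) x else - block_sum f (fst k) (F k) x)
      = (\<Sum>k\<in>P. \<Sum>s\<in>F k. \<theta> (fst k, s) * gs (fst k, s) f * U (fst k, s) x)" for x
    unfolding summand block_sum_def using band_index
    by (intro sum.cong refl) (auto simp: sum_negf)
  also have "\<dots> x = (\<Sum>i\<in>Q. \<theta> i * gs i f * U i x)" for x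
    unfolding Q_def sum.reindex[OF inj] using P(1) F
    by (subst sum.Sigma) (auto simp: split_beta)
  finally have "Lp_norm p (\<lambda>x. \<Sum>k\<in>P. if \<epsilon> k then block_sum f (fst k) (F k) x else - block_sum f (fst k) (F k) x)
      = Lp_norm p (\<lambda>x. \<Sum>i\<in>Q. \<theta> i * gs i f * U i x)"
    by simp
  also have "\<dots> \<le> K * Lp_norm p f"
    using frame f Q p
    by (intro Lp_uncond_frame_sum_le) (auto simp: U_def \<theta>_def norm_mult norm_sgn phase_def)
  finally show ?thesis .
qed

lemma sum_block_norms_power2_le:
  assumes f: "f \<in> Lp p" and P: "finite P" "P \<subseteq> T \<times> UNIV"
    and F: "\<And>k. k \<in> P \<Longrightarrow> finite (F k) \<and> F k \<subseteq> band (snd k)"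
  shows "(\<Sum>k\<in>P. (Lp_norm p (block_sum f (fst k) (F k)))\<^sup>2) \<le> 144 * (K * Lp_norm p f)\<^sup>2"
proof -
  define W where "W k = block_sum f (fst k) (F k)" for k
  have W: "W k \<in> Lp p" if "k \<in> P" for k
    unfolding W_def using F[OF that] by (intro block_sum_Lp) auto
  have "(\<lambda>x. if \<epsilon> k then W k x else - W k x) \<in> Lp p" if "k \<in> P" for k \<epsilon>
    using W[OF that] Lp_cmult[OF W[OF that], of "- 1"] by (cases "\<epsilon> k") simp_all
  then have signed: "(\<lambda>x. \<Sum>k\<in>P. if \<epsilon> k then W k x else - W k x) \<in> Lp p" for \<epsilon>
    using p P by (intro Lp_sum) auto
  have "(\<Sum>k\<in>P. (Lp_norm p (W k))\<^sup>2) \<le> 12 powr (2 / p) * (K * Lp_norm p f)\<^sup>2"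
    unfolding Lp_norm_eq_Lnorm
  proof (rule sum_Lnorm_power2_le_sign_sums)
    show "Lnorm lborel p (\<lambda>x. cmod (\<Sum>k\<in>P. if \<epsilon> k then W k x else - W k x))
        \<le> K * Lnorm lborel p (\<lambda>x. cmod (f x))" for \<epsilon>
      using signed_block_sums_le[OF f P F, of \<epsilon>] unfolding W_def Lp_norm_eq_Lnorm .
  qed (use p P W signed in \<open>auto simp: Lp_def\<close>)
  also have "\<dots> \<le> 144 * (K * Lp_norm p f)\<^sup>2"
    using p powr_mono[of "2 / p" 2 12] by (intro mult_right_mono) (auto simp: divide_le_eq)
  finally show ?thesis
    by (simp add: W_def)
qed

lemma block_sums_bound:
  assumes f: "f \<in> Lp p" and P: "finite P" "P \<subseteq> T \<times> UNIV"
    and F: "\<And>k. k \<in> P \<Longrightarrow> finite (F k) \<and> F k \<subseteq> band (snd k)"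
  shows "(\<Sum>k\<in>P. (\<Sum>s\<in>F k. cmod (gs (fst k, s) f))\<^sup>2) \<le> (24 * K * Lp_norm p f)\<^sup>2"
proof -
  have "(\<Sum>s\<in>F k. cmod (gs (fst k, s) f)) \<le> 2 * Lp_norm p (block_sum f (fst k) (F k))" if "k \<in> P" for k
    using F[OF that] by (intro coefficient_sum_le_block_sum[where l = "snd k"]) auto
  then have "(\<Sum>k\<in>P. (\<Sum>s\<in>F k. cmod (gs (fst k, s) f))\<^sup>2)
      \<le> (\<Sum>k\<in>P. (2 * Lp_norm p (block_sum f (fst k) (F k)))\<^sup>2)"
    by (intro sum_mono power_mono sum_nonneg) auto
  also have "\<dots> = 4 * (\<Sum>k\<in>P. (Lp_norm p (block_sum f (fst k) (F k)))\<^sup>2)"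
    by (simp add: power_mult_distrib sum_distrib_left)
  also have "\<dots> \<le> 4 * (144 * (K * Lp_norm p f)\<^sup>2)"
    using sum_block_norms_power2_le[OF f P F] by simp
  also have "\<dots> = (24 * K * Lp_norm p f)\<^sup>2"
    by (simp add: power_mult_distrib)
  finally show ?thesis .
qed

lemma band_sum_le:
  assumes "f \<in> Lp p" "t \<in> T" "finite F" "F \<subseteq> band l"
  shows "(\<Sum>s\<in>F. cmod (gs (t, s) f)) \<le> 24 * K * Lp_norm p f"
proof -
  have "(\<Sum>s\<in>F. cmod (gs (t, s) f))\<^sup>2 \<le> (24 * K * Lp_norm p f)\<^sup>2"
    using block_sums_bound[OF assms(1), of "{(t, l)}" "\<lambda>_. F"] assms by simp
  moreover have "0 \<le> 24 * K * Lp_norm p f"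
    using Lp_uncond_frame_bound_nonneg[OF p(1) frame assms(1)] by simp
  ultimately show ?thesis
    by (rule power2_le_imp_le)
qed

lemma band_summable:
  assumes "f \<in> Lp p" "t \<in> T"
  shows "(\<lambda>s. cmod (gs (t, s) f)) summable_on band l"
  using band_sum_le[OF assms] by (intro nonneg_bdd_above_summable_on bdd_aboveI2) auto

lemma sum_band_infsums_le:
  assumes f: "f \<in> Lp p" and P: "finite P" "P \<subseteq> T \<times> UNIV"
  shows "(\<Sum>k\<in>P. (\<Sum>\<^sub>\<infinity>s\<in>band (snd k). cmod (gs (fst k, s) f))\<^sup>2) \<le> (24 * K * Lp_norm p f)\<^sup>2"
proof -
  define D where "D k = (\<lambda>F. \<Sum>s\<in>F. cmod (gs (fst k, s) f)) ` {F. finite F \<and> F \<subseteq> band (snd k)}" for k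
  have "(\<Sum>\<^sub>\<infinity>s\<in>band (snd k). cmod (gs (fst k, s) f)) = Sup (D k)" if "k \<in> P" for k
    unfolding D_def using band_summable[OF f] P that
    by (intro infsum_nonneg_is_SUPREMUM_real) auto
  moreover have "(\<Sum>k\<in>P. (Sup (D k))\<^sup>2) \<le> (24 * K * Lp_norm p f)\<^sup>2"
  proof (rule sum_power2_Sup_le[OF P(1)])
    fix d
    assume "\<And>k. k \<in> P \<Longrightarrow> d k \<in> D k"
    then have "\<forall>k\<in>P. \<exists>F. (finite F \<and> F \<subseteq> band (snd k)) \<and> d k = (\<Sum>s\<in>F. cmod (gs (fst k, s) f))"
      unfolding D_def by blast
    from bchoice[OF this] obtain F where F: "\<forall>k\<in>P. (finite (F k) \<and> F k \<subseteq> band (snd k))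
        \<and> d k = (\<Sum>s\<in>F k. cmod (gs (fst k, s) f))"
      by blast
    then show "(\<Sum>k\<in>P. (d k)\<^sup>2) \<le> (24 * K * Lp_norm p f)\<^sup>2"
      using block_sums_bound[OF f P, of F] by simp
  qed (auto simp: D_def intro: sum_nonneg)
  ultimately show ?thesis
    by simp
qed

lemma coefficient_bound:
  assumes f: "f \<in> Lp p"
  shows "(\<Sum>\<^sub>\<infinity>t\<in>T. \<Sum>\<^sub>\<infinity>l\<in>(UNIV::int set). (\<Sum>\<^sub>\<infinity>s\<in>band l. ennreal (cmod (gs (t, s) f)))\<^sup>2)
    \<le> ennreal ((24 * K * Lp_norm p f)\<^sup>2)"
proof -
  define Y where "Y t l = (\<Sum>\<^sub>\<infinity>s\<in>band l. cmod (gs (t, s) f))" for t l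
  have "(\<Sum>\<^sub>\<infinity>s\<in>band l. ennreal (cmod (gs (t, s) f)))\<^sup>2 = ennreal ((Y t l)\<^sup>2)" if "t \<in> T" for t l
    unfolding Y_def using band_summable[OF f that]
    by (simp add: ennreal_infsum ennreal_power infsum_nonneg)
  then have "(\<Sum>\<^sub>\<infinity>t\<in>T. \<Sum>\<^sub>\<infinity>l\<in>(UNIV::int set). (\<Sum>\<^sub>\<infinity>s\<in>band l. ennreal (cmod (gs (t, s) f)))\<^sup>2)
      = (\<Sum>\<^sub>\<infinity>t\<in>T. \<Sum>\<^sub>\<infinity>l\<in>(UNIV::int set). ennreal ((Y t l)\<^sup>2))"
    by (intro infsum_cong) simp
  also have "\<dots> \<le> ennreal ((24 * K * Lp_norm p f)\<^sup>2)"
  proof (rule double_infsum_ennreal_le)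
    fix T0 :: "real set" and L0 :: "int set"
    assume "finite T0" "T0 \<subseteq> T" "finite L0"
    then have "(\<Sum>k\<in>T0 \<times> L0. (Y (fst k) (snd k))\<^sup>2) \<le> (24 * K * Lp_norm p f)\<^sup>2"
      unfolding Y_def by (intro sum_band_infsums_le f) auto
    then show "(\<Sum>t\<in>T0. \<Sum>l\<in>L0. (Y t l)\<^sup>2) \<le> (24 * K * Lp_norm p f)\<^sup>2"
      by (simp add: sum.cartesian_product split_beta)
  qed simp
  finally show ?thesis .
qed

end

theorem mainTheorem11:
  fixes p :: real
  assumes "1 < p" "p < 2"
  shows "\<exists>C::real. \<forall>(g::real \<Rightarrow> complex) (T::real set) (S::real set)
            (gs::real \<times> real \<Rightarrow> (real \<Rightarrow> complex) \<Rightarrow> complex) (K::real) (\<delta>::real).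
     g \<in> Lp p \<and> Lp_norm p g = 1 \<and> countable T \<and> countable S \<and>
     Lp_uncond_frame p (T \<times> S) (\<lambda>(t, s) x. expo s x * transl t g x) gs K \<and>
     \<delta> > 0 \<and>
     (SUP \<sigma>\<in>{0<..<\<delta>}. LINT x|lborel. cmod (g x) powr p * cmod (expo \<sigma> x - 1) powr p)
        < 2 powr (- p)
     \<longrightarrow>
     (\<forall>f\<in>Lp p.
        (\<Sum>\<^sub>\<infinity>t\<in>T. \<Sum>\<^sub>\<infinity>l\<in>(UNIV::int set).
           (\<Sum>\<^sub>\<infinity>s\<in>{s\<in>S. of_int l * \<delta> \<le> s \<and> s < (of_int l + 1) * \<delta>}.
              ennreal (cmod (gs (t, s) f))) ^ 2)
        \<le> ennreal ((2 * K * C * Lp_norm p f) ^ 2))"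
proof (intro exI[of _ 12] allI impI ballI, elim conjE, goal_cases)
  case (1 g T S gs K \<delta> f)
  then interpret gabor_uncond_frame p g T S gs K \<delta>
    using assms by unfold_locales auto
  show ?case
    using coefficient_bound[OF \<open>f \<in> Lp p\<close>] by (simp add: band_def mult_ac)
qed

end
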